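(* Fix a point with a symmetric positive definite matrix $g_{\alpha\beta}$ ($\alpha,\beta\in\{1,2\}$), $g=\det(g_{\alpha\beta})$, inverse $g^{\alpha\beta}$. Let $P=P(\rho,e)$ be a smooth pressure law, $U=(\rho,v^1,v^2,V^3,e)^T$ with $\rho>0$, $E=e+\tfrac12\left(g_{\alpha\beta}v^\alpha v^\beta+(V^3)^2\right)$, and assume $PP_e+\rho^2P_\rho>0$, $c=\frac{\sqrt{PP_e+\rho^2P_\rho}}{\rho}$. Let $A_0$ be the Jacobian with respect to $U$ of $Q(U)=\big(\rho\sqrt g,\ \rho\sqrt g\,v^1,\ \rho\sqrt g\,v^2,\ \rho\sqrt g\,V^3,\ \rho\sqrt g\,E\big)^T$, and for $\alpha=1,2$ let $A^\alpha$ be the Jacobian with respect to $U$ of $$F^\alpha(U)=\Big(\rho\sqrt g\,v^\alpha,\ \sqrt g[\rho v^1v^\alpha+g^{1\alpha}P],\ \sqrt g[\rho v^2v^\alpha+g^{2\alpha}P],\ \rho\sqrt g\,V^3v^\alpha,\ \sqrt g[\rho E+P]v^\alpha\Big)^T$$ (with $g_{\alpha\beta}$ held fixed). Set $\bar A^\alpha=A_0^{-1}A^\alpha$. For every covector $(w_1,w_2)$ with $g^{\alpha\beta}w_\alpha w_\beta=1$, the eigenvalues of $\bar A_w=w_1\bar A^1+w_2\bar A^2$ are $$v^\alpha w_\alpha,\ v^\alpha w_\alpha,\ v^\alpha w_\alpha,\ v^\alpha w_\alpha+c,\ v^\alpha w_\alpha-c.$$ In particular the pseudo-time-dependent system $A_0U_t+A^1U_{\xi^1}+A^2U_{\xi^2}=0$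 is everywhere non-strictly hyperbolic.
   Context: A first-order system $U_t+\sum_\alpha\bar A^\alpha U_{\xi^\alpha}=0$ is non-strictly hyperbolic if for every unit (co)vector $w$ the eigenvalues of $\sum_\alpha w_\alpha\bar A^\alpha$ are all real but not all distinct. Einstein summation over repeated Greek indices in $\{1,2\}$ is used. The system arises from reinserting (nonphysical) pseudo-time derivatives of the conserved quantities into the steady conical Euler equations on the unit sphere. *)

theory Defs
  imports "HOL-Analysis.Analysis" "HOL-Library.Numeral_Type"
begin

text \<open>State vector U = (rho, v1, v2, V3, e) as an element of real^5,
  components u$1 .. u$5.  The metric g_{ab} is a 2x2 matrix gm, its inverse is gi.\<close>

definition specE :: "real^2^2 \<Rightarrow> real^5 \<Rightarrow> real" where
  "specE gm u = u$5 + (1/2) * ((\<Sum>a\<in>UNIV. \<Sum>b\<in>UNIV. gm$a$b * u$(if a = 1 then 2 else 3) * u$(if b = 1 then 2 else 3)) + (u$4)^2)"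

definition vel :: "real^5 \<Rightarrow> real^2" where
  "vel u = vector [u$2, u$3]"

definition consQ :: "real^2^2 \<Rightarrow> real^5 \<Rightarrow> real^5" where
  "consQ gm u = (let sqg = sqrt (det gm) :: real; r = u$1 in
     vector [r* sqg, r* sqg* u$2, r* sqg* u$3, r* sqg* u$4, r* sqg* specE gm u])"

definition fluxF :: "real^2^2 \<Rightarrow> (real \<times> real \<Rightarrow> real) \<Rightarrow> 2 \<Rightarrow> real^5 \<Rightarrow> real^5" where
  "fluxF gm P al u = (let sqg = sqrt (det gm) :: real; gi = matrix_inv gm; r = u$1; p = P (u$1, u$5);
      va = vel u $ al in
     vector [r* sqg* va,
             sqg* (r* u$2* va + gi$1$al* p),
             sqg* (r* u$3* va + gi$2$al* p),
             r* sqg* u$4* va,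
             sqg* (r* specE gm u + p)* va])"

text \<open>Characteristic polynomial det(x I - M) equals prod (x - l) over the list ls, i.e. the
  eigenvalues of M, counted with algebraic multiplicity, are exactly the entries of ls.\<close>
definition eigenvalues_are :: "real^5^5 \<Rightarrow> real list \<Rightarrow> bool" where
  "eigenvalues_are M ls \<longleftrightarrow> length ls = 5 \<and>
     (\<forall>x::real. det (mat x - M) = (\<Prod>l\<leftarrow>ls. x - l))"

text \<open>Non-strict hyperbolicity of U_t + Abar^a U_{xi^a} = 0 w.r.t. the metric with inverse gi:
  for every unit covector w the eigenvalues of w_a Abar^a are all real but not all distinct.\<close>
definition nonstrictly_hyperbolic :: "real^2^2 \<Rightarrow> real^5^5 \<Rightarrow> real^5^5 \<Rightarrow> bool" where
  "nonstrictly_hyperbolic gi B1 B2 \<longleftrightarrow>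
     (\<forall>w::real^2. w \<bullet> (gi *v w) = 1 \<longrightarrow>
        (\<exists>ls. eigenvalues_are ((w$1) *\<^sub>R B1 + (w$2) *\<^sub>R B2) ls \<and> \<not> distinct ls))"

end

theory Submission
  imports Defs
begin

(* A0 is invertible (det A0 = sqrt(g)^5 rho^4) and A^alpha = A0 Bbar^alpha, where Bbar^alpha is the
   coefficient matrix of the Euler equations in the primitive variables U:
     rho_t + v^a rho_a + rho v^a_a = 0,
     v^b_t + v^a v^b_a + g^{ba} (P_rho rho_a + P_e e_a) / rho = 0,
     V3_t + v^a V3_a = 0,
     e_t + v^a e_a + (P / rho) v^a_a = 0.
   Hence w_a Bbar^a = (v.w) I + N, where N only couples (rho, e) with (v^1, v^2). Its two nonzero
   eigenvalues satisfy lambda^2 = g^{ab} w_a w_b (P_rho + P P_e / rho^2) = c^2, so the characteristic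
   polynomial is (x - v.w)^3 ((x - v.w)^2 - c^2). *)

lemma exhaust_5:
  fixes x :: 5
  shows "x = 1 \<or> x = 2 \<or> x = 3 \<or> x = 4 \<or> x = 5"
proof (induct x)
  case (of_int z)
  then have "z = 0 \<or> z = 1 \<or> z = 2 \<or> z = 3 \<or> z = 4" by fastforce
  then show ?case by auto
qed

lemma forall_5: "(\<forall>i::5. P i) \<longleftrightarrow> P 1 \<and> P 2 \<and> P 3 \<and> P 4 \<and> P 5"
  by (metis exhaust_5)

lemma UNIV_5: "UNIV = {1, 2, 3, 4, 5::5}"
  using exhaust_5 by auto

lemma sum_5: "sum f (UNIV::5 set) = f 1 + f 2 + f 3 + f 4 + f 5"
  unfolding UNIV_5 by (simp add: ac_simps)

lemma vector_5 [simp]: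
  "(vector [a, b, c, d, e] :: 'a::zero^5) $ 1 = a"
  "(vector [a, b, c, d, e] :: 'a::zero^5) $ 2 = b"
  "(vector [a, b, c, d, e] :: 'a::zero^5) $ 3 = c"
  "(vector [a, b, c, d, e] :: 'a::zero^5) $ 4 = d"
  "(vector [a, b, c, d, e] :: 'a::zero^5) $ 5 = e"
  unfolding vector_def by simp_all

lemma det_5: "det (A::'a::comm_ring_1^5^5) =
    A$1$1 * A$2$2 * A$3$3 * A$4$4 * A$5$5
    - A$1$1 * A$2$2 * A$3$3 * A$4$5 * A$5$4
    - A$1$1 * A$2$2 * A$3$4 * A$4$3 * A$5$5
    + A$1$1 * A$2$2 * A$3$4 * A$4$5 * A$5$3
    + A$1$1 * A$2$2 * A$3$5 * A$4$3 * A$5$4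
    - A$1$1 * A$2$2 * A$3$5 * A$4$4 * A$5$3
    - A$1$1 * A$2$3 * A$3$2 * A$4$4 * A$5$5
    + A$1$1 * A$2$3 * A$3$2 * A$4$5 * A$5$4
    + A$1$1 * A$2$3 * A$3$4 * A$4$2 * A$5$5
    - A$1$1 * A$2$3 * A$3$4 * A$4$5 * A$5$2
    - A$1$1 * A$2$3 * A$3$5 * A$4$2 * A$5$4
    + A$1$1 * A$2$3 * A$3$5 * A$4$4 * A$5$2
    + A$1$1 * A$2$4 * A$3$2 * A$4$3 * A$5$5
    - A$1$1 * A$2$4 * A$3$2 * A$4$5 * A$5$3
    - A$1$1 * A$2$4 * A$3$3 * A$4$2 * A$5$5
    + A$1$1 * A$2$4 * A$3$3 * A$4$5 * A$5$2
    + A$1$1 * A$2$4 * A$3$5 * A$4$2 * A$5$3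
    - A$1$1 * A$2$4 * A$3$5 * A$4$3 * A$5$2
    - A$1$1 * A$2$5 * A$3$2 * A$4$3 * A$5$4
    + A$1$1 * A$2$5 * A$3$2 * A$4$4 * A$5$3
    + A$1$1 * A$2$5 * A$3$3 * A$4$2 * A$5$4
    - A$1$1 * A$2$5 * A$3$3 * A$4$4 * A$5$2
    - A$1$1 * A$2$5 * A$3$4 * A$4$2 * A$5$3
    + A$1$1 * A$2$5 * A$3$4 * A$4$3 * A$5$2
    - A$1$2 * A$2$1 * A$3$3 * A$4$4 * A$5$5
    + A$1$2 * A$2$1 * A$3$3 * A$4$5 * A$5$4
    + A$1$2 * A$2$1 * A$3$4 * A$4$3 * A$5$5
    - A$1$2 * A$2$1 * A$3$4 * A$4$5 * A$5$3
    - A$1$2 * A$2$1 * A$3$5 * A$4$3 * A$5$4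
    + A$1$2 * A$2$1 * A$3$5 * A$4$4 * A$5$3
    + A$1$2 * A$2$3 * A$3$1 * A$4$4 * A$5$5
    - A$1$2 * A$2$3 * A$3$1 * A$4$5 * A$5$4
    - A$1$2 * A$2$3 * A$3$4 * A$4$1 * A$5$5
    + A$1$2 * A$2$3 * A$3$4 * A$4$5 * A$5$1
    + A$1$2 * A$2$3 * A$3$5 * A$4$1 * A$5$4
    - A$1$2 * A$2$3 * A$3$5 * A$4$4 * A$5$1
    - A$1$2 * A$2$4 * A$3$1 * A$4$3 * A$5$5
    + A$1$2 * A$2$4 * A$3$1 * A$4$5 * A$5$3
    + A$1$2 * A$2$4 * A$3$3 * A$4$1 * A$5$5
    - A$1$2 * A$2$4 * A$3$3 * A$4$5 * A$5$1
    - A$1$2 * A$2$4 * A$3$5 * A$4$1 * A$5$3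
    + A$1$2 * A$2$4 * A$3$5 * A$4$3 * A$5$1
    + A$1$2 * A$2$5 * A$3$1 * A$4$3 * A$5$4
    - A$1$2 * A$2$5 * A$3$1 * A$4$4 * A$5$3
    - A$1$2 * A$2$5 * A$3$3 * A$4$1 * A$5$4
    + A$1$2 * A$2$5 * A$3$3 * A$4$4 * A$5$1
    + A$1$2 * A$2$5 * A$3$4 * A$4$1 * A$5$3
    - A$1$2 * A$2$5 * A$3$4 * A$4$3 * A$5$1
    + A$1$3 * A$2$1 * A$3$2 * A$4$4 * A$5$5
    - A$1$3 * A$2$1 * A$3$2 * A$4$5 * A$5$4
    - A$1$3 * A$2$1 * A$3$4 * A$4$2 * A$5$5
    + A$1$3 * A$2$1 * A$3$4 * A$4$5 * A$5$2
    + A$1$3 * A$2$1 * A$3$5 * A$4$2 * A$5$4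
    - A$1$3 * A$2$1 * A$3$5 * A$4$4 * A$5$2
    - A$1$3 * A$2$2 * A$3$1 * A$4$4 * A$5$5
    + A$1$3 * A$2$2 * A$3$1 * A$4$5 * A$5$4
    + A$1$3 * A$2$2 * A$3$4 * A$4$1 * A$5$5
    - A$1$3 * A$2$2 * A$3$4 * A$4$5 * A$5$1
    - A$1$3 * A$2$2 * A$3$5 * A$4$1 * A$5$4
    + A$1$3 * A$2$2 * A$3$5 * A$4$4 * A$5$1
    + A$1$3 * A$2$4 * A$3$1 * A$4$2 * A$5$5
    - A$1$3 * A$2$4 * A$3$1 * A$4$5 * A$5$2
    - A$1$3 * A$2$4 * A$3$2 * A$4$1 * A$5$5
    + A$1$3 * A$2$4 * A$3$2 * A$4$5 * A$5$1
    + A$1$3 * A$2$4 * A$3$5 * A$4$1 * A$5$2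
    - A$1$3 * A$2$4 * A$3$5 * A$4$2 * A$5$1
    - A$1$3 * A$2$5 * A$3$1 * A$4$2 * A$5$4
    + A$1$3 * A$2$5 * A$3$1 * A$4$4 * A$5$2
    + A$1$3 * A$2$5 * A$3$2 * A$4$1 * A$5$4
    - A$1$3 * A$2$5 * A$3$2 * A$4$4 * A$5$1
    - A$1$3 * A$2$5 * A$3$4 * A$4$1 * A$5$2
    + A$1$3 * A$2$5 * A$3$4 * A$4$2 * A$5$1
    - A$1$4 * A$2$1 * A$3$2 * A$4$3 * A$5$5
    + A$1$4 * A$2$1 * A$3$2 * A$4$5 * A$5$3
    + A$1$4 * A$2$1 * A$3$3 * A$4$2 * A$5$5
    - A$1$4 * A$2$1 * A$3$3 * A$4$5 * A$5$2
    - A$1$4 * A$2$1 * A$3$5 * A$4$2 * A$5$3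
    + A$1$4 * A$2$1 * A$3$5 * A$4$3 * A$5$2
    + A$1$4 * A$2$2 * A$3$1 * A$4$3 * A$5$5
    - A$1$4 * A$2$2 * A$3$1 * A$4$5 * A$5$3
    - A$1$4 * A$2$2 * A$3$3 * A$4$1 * A$5$5
    + A$1$4 * A$2$2 * A$3$3 * A$4$5 * A$5$1
    + A$1$4 * A$2$2 * A$3$5 * A$4$1 * A$5$3
    - A$1$4 * A$2$2 * A$3$5 * A$4$3 * A$5$1
    - A$1$4 * A$2$3 * A$3$1 * A$4$2 * A$5$5
    + A$1$4 * A$2$3 * A$3$1 * A$4$5 * A$5$2
    + A$1$4 * A$2$3 * A$3$2 * A$4$1 * A$5$5
    - A$1$4 * A$2$3 * A$3$2 * A$4$5 * A$5$1
    - A$1$4 * A$2$3 * A$3$5 * A$4$1 * A$5$2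
    + A$1$4 * A$2$3 * A$3$5 * A$4$2 * A$5$1
    + A$1$4 * A$2$5 * A$3$1 * A$4$2 * A$5$3
    - A$1$4 * A$2$5 * A$3$1 * A$4$3 * A$5$2
    - A$1$4 * A$2$5 * A$3$2 * A$4$1 * A$5$3
    + A$1$4 * A$2$5 * A$3$2 * A$4$3 * A$5$1
    + A$1$4 * A$2$5 * A$3$3 * A$4$1 * A$5$2
    - A$1$4 * A$2$5 * A$3$3 * A$4$2 * A$5$1
    + A$1$5 * A$2$1 * A$3$2 * A$4$3 * A$5$4
    - A$1$5 * A$2$1 * A$3$2 * A$4$4 * A$5$3
    - A$1$5 * A$2$1 * A$3$3 * A$4$2 * A$5$4
    + A$1$5 * A$2$1 * A$3$3 * A$4$4 * A$5$2
    + A$1$5 * A$2$1 * A$3$4 * A$4$2 * A$5$3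
    - A$1$5 * A$2$1 * A$3$4 * A$4$3 * A$5$2
    - A$1$5 * A$2$2 * A$3$1 * A$4$3 * A$5$4
    + A$1$5 * A$2$2 * A$3$1 * A$4$4 * A$5$3
    + A$1$5 * A$2$2 * A$3$3 * A$4$1 * A$5$4
    - A$1$5 * A$2$2 * A$3$3 * A$4$4 * A$5$1
    - A$1$5 * A$2$2 * A$3$4 * A$4$1 * A$5$3
    + A$1$5 * A$2$2 * A$3$4 * A$4$3 * A$5$1
    + A$1$5 * A$2$3 * A$3$1 * A$4$2 * A$5$4
    - A$1$5 * A$2$3 * A$3$1 * A$4$4 * A$5$2
    - A$1$5 * A$2$3 * A$3$2 * A$4$1 * A$5$4
    + A$1$5 * A$2$3 * A$3$2 * A$4$4 * A$5$1
    + A$1$5 * A$2$3 * A$3$4 * A$4$1 * A$5$2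
    - A$1$5 * A$2$3 * A$3$4 * A$4$2 * A$5$1
    - A$1$5 * A$2$4 * A$3$1 * A$4$2 * A$5$3
    + A$1$5 * A$2$4 * A$3$1 * A$4$3 * A$5$2
    + A$1$5 * A$2$4 * A$3$2 * A$4$1 * A$5$3
    - A$1$5 * A$2$4 * A$3$2 * A$4$3 * A$5$1
    - A$1$5 * A$2$4 * A$3$3 * A$4$1 * A$5$2
    + A$1$5 * A$2$4 * A$3$3 * A$4$2 * A$5$1"
proof -
  have f1: "finite {2::5, 3, 4, 5}" "1 \<notin> {2::5, 3, 4, 5}" by auto
  have f2: "finite {3::5, 4, 5}" "2 \<notin> {3::5, 4, 5}" by auto
  have f3: "finite {4::5, 5}" "3 \<notin> {4::5, 5}" by auto
  have f4: "finite {5::5}" "4 \<notin> {5::5}" by auto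
  show ?thesis
    unfolding det_def UNIV_5
    unfolding sum_over_permutations_insert[OF f1]
    unfolding sum_over_permutations_insert[OF f2]
    unfolding sum_over_permutations_insert[OF f3]
    unfolding sum_over_permutations_insert[OF f4]
    unfolding permutes_sing
    by (simp add: sign_swap_id permutation_swap_id sign_compose permutation_compose sign_id swap_id_eq)
qed

lemma has_derivative_vec_nth [derivative_intros]:
  "((\<lambda>x. x $ i) has_derivative (\<lambda>h. h $ i)) F"
  by (rule bounded_linear_imp_has_derivative[OF bounded_linear_vec_nth])

lemma has_derivative_vec_componentwise:
  fixes f :: "'a::real_normed_vector \<Rightarrow> real^'m"
  assumes "\<And>k. ((\<lambda>x. f x $ k) has_derivative (\<lambda>h. f' h $ k)) (at a within S)"
  shows "(f has_derivative f') (at a within S)"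
proof (subst has_derivative_componentwise_within, intro ballI)
  fix i :: "real^'m"
  assume "i \<in> Basis"
  then obtain k where "i = axis k 1"
    using axis_inverse by blast
  then show "((\<lambda>x. f x \<bullet> i) has_derivative (\<lambda>h. f' h \<bullet> i)) (at a within S)"
    using assms[of k] by (simp add: inner_axis)
qed

lemma jacobian_at_eqI:
  fixes A :: "real^'n^'m"
  assumes "(f has_derivative (\<lambda>h. A *v h)) (at x)"
  shows "jacobian f (at x) = A"
  unfolding jacobian_def frechet_derivative_at[OF assms, symmetric]
  by (rule matrix_of_matrix_vector_mul)

lemma matrix_inv_mult_self:
  assumes "invertible (A :: 'a::semiring_1^'n^'n)"
  shows "A ** matrix_inv A = mat 1" and "matrix_inv A ** A = mat 1"
  using someI_ex[OF assms[unfolded invertible_def]] unfolding matrix_inv_def by auto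

lemma matrix_inv_mult_cancel_left:
  assumes "invertible (A :: 'a::semiring_1^'n^'n)"
  shows "matrix_inv A ** (A ** B) = B"
  by (simp add: matrix_mul_assoc matrix_inv_mult_self(2)[OF assms])

lemma vector_matrix_mult_right_inverse_sym:
  fixes G H :: "'a::comm_semiring_1^'n^'n"
  assumes "transpose G = G" and "G ** H = mat 1"
  shows "(G *v x) v* H = x"
proof -
  have "(G *v x) v* H = (x v* G) v* H"
    using transpose_matrix_vector[of G x] assms(1) by simp
  also have "\<dots> = x v* (G ** H)"
    by (rule vector_matrix_mul_assoc)
  finally show ?thesis
    using assms(2) by simp
qed

lemma symmetric_matrix_nth:
  assumes "transpose G = G"
  shows "G$i$j = G$j$i"
  using arg_cong[OF assms, of "\<lambda>A. A$j$i"] by (simp add: transpose_def)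

lemma det_pos_if_pos_definite_2:
  fixes G :: "real^2^2"
  assumes sym: "transpose G = G" and pos: "\<forall>x. x \<noteq> 0 \<longrightarrow> x \<bullet> (G *v x) > 0"
  shows "det G > 0"
proof -
  have G21: "G$2$1 = G$1$2"
    using symmetric_matrix_nth[OF sym] .
  have "axis 1 1 \<bullet> (G *v axis 1 1) > 0"
    using pos by (simp add: axis_eq_0_iff)
  then have G11: "G$1$1 > 0"
    by (simp add: inner_vec_def matrix_vector_mult_def sum_2 axis_def)
  define x where "x = (vector [G$1$2, - G$1$1] :: real^2)"
  have "x $ 2 \<noteq> 0"
    using G11 by (simp add: x_def)
  then have "x \<bullet> (G *v x) > 0"
    using pos by (metis zero_index)
  moreover have "x \<bullet> (G *v x) = G$1$1 * det G"
    by (simp add: x_def det_2 inner_vec_def matrix_vector_mult_def sum_2 G21 algebra_simps)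
  ultimately show ?thesis
    using G11 by (simp add: zero_less_mult_iff)
qed

lemma vel_nth [simp]: "vel u $ 1 = u $ 2" "vel u $ 2 = u $ 3"
  by (simp_all add: vel_def)

definition lowered_vel :: "real^2^2 \<Rightarrow> real^5 \<Rightarrow> real^2" where
  "lowered_vel gm u = gm *v vel u"

lemma lowered_vel_nth:
  "lowered_vel gm u $ 1 = gm$1$1 * u$2 + gm$1$2 * u$3"
  "lowered_vel gm u $ 2 = gm$2$1 * u$2 + gm$2$2 * u$3"
  by (simp_all add: lowered_vel_def matrix_vector_mult_def sum_2)

lemma specE_eq:
  "specE gm u = u$5 + (gm$1$1 * u$2 * u$2 + gm$1$2 * u$2 * u$3 + gm$2$1 * u$3 * u$2
     + gm$2$2 * u$3 * u$3 + u$4 * u$4) / 2"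
  by (simp add: specE_def sum_2 power2_eq_square)

lemma has_derivative_specE:
  assumes "transpose gm = gm"
  shows "(specE gm has_derivative
    (\<lambda>h. h$5 + lowered_vel gm u $ 1 * h$2 + lowered_vel gm u $ 2 * h$3 + u$4 * h$4)) (at u)"
  unfolding specE_eq[abs_def] lowered_vel_nth
  using symmetric_matrix_nth[OF assms, of 2 1]
  by (auto intro!: derivative_eq_intros ext simp: field_simps)

definition consQ_jacobian :: "real^2^2 \<Rightarrow> real^5 \<Rightarrow> real^5^5" where
  "consQ_jacobian gm u = (let s = sqrt (det gm); r = u$1; m = lowered_vel gm u in vector [
     vector [s, 0, 0, 0, 0],
     vector [s * u$2, s * r, 0, 0, 0],
     vector [s * u$3, 0, s * r, 0, 0],
     vector [s * u$4, 0, 0, s * r, 0],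
     vector [s * specE gm u, s * r * m$1, s * r * m$2, s * r * u$4, s * r]])"

definition flux_jacobian ::
    "real^2^2 \<Rightarrow> (real \<times> real \<Rightarrow> real) \<Rightarrow> real \<Rightarrow> real \<Rightarrow> 2 \<Rightarrow> real^5 \<Rightarrow> real^5^5" where
  "flux_jacobian gm P Pr Pe al u = (let s = sqrt (det gm); gi = matrix_inv gm; r = u$1;
     p = P (u$1, u$5); E = specE gm u; m = lowered_vel gm u; va = vel u $ al;
     d = axis al 1 :: real^2 in vector [
     vector [s * va, s * r * d$1, s * r * d$2, 0, 0],
     vector [s * (u$2 * va + gi$1$al * Pr), s * r * (va + u$2 * d$1), s * r * u$2 * d$2, 0,
             s * gi$1$al * Pe],
     vector [s * (u$3 * va + gi$2$al * Pr), s * r * u$3 * d$1, s * r * (va + u$3 * d$2), 0,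
             s * gi$2$al * Pe],
     vector [s * u$4 * va, s * r * u$4 * d$1, s * r * u$4 * d$2, s * r * va, 0],
     vector [s * (E + Pr) * va, s * (r * m$1 * va + (r * E + p) * d$1),
             s * (r * m$2 * va + (r * E + p) * d$2), s * r * u$4 * va, s * (r + Pe) * va]])"

lemma has_derivative_consQ:
  assumes "transpose gm = gm"
  shows "(consQ gm has_derivative (\<lambda>h. consQ_jacobian gm u *v h)) (at u)"
proof (rule has_derivative_vec_componentwise)
  note E' = has_derivative_specE[OF assms]
  have "\<forall>k. ((\<lambda>x. consQ gm x $ k) has_derivative
      (\<lambda>h. (consQ_jacobian gm u *v h) $ k)) (at u)"
    unfolding forall_5
    by (simp add: consQ_def consQ_jacobian_def Let_def matrix_vector_mult_def sum_5;
        auto intro!: derivative_eq_intros E' ext simp: algebra_simps)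
  then show "((\<lambda>x. consQ gm x $ k) has_derivative
      (\<lambda>h. (consQ_jacobian gm u *v h) $ k)) (at u)" for k
    by blast
qed

lemma has_derivative_fluxF:
  assumes sym: "transpose gm = gm"
    and P: "(P has_derivative (\<lambda>h. Pr * fst h + Pe * snd h)) (at (u$1, u$5))"
  shows "(fluxF gm P al has_derivative (\<lambda>h. flux_jacobian gm P Pr Pe al u *v h)) (at u)"
proof (rule has_derivative_vec_componentwise)
  note E' = has_derivative_specE[OF sym]
  have "((\<lambda>x. (x$1, x$5)) has_derivative (\<lambda>h. (h$1, h$5))) (at u)"
    by (auto intro!: derivative_eq_intros)
  from has_derivative_compose[OF this P]
  have P': "((\<lambda>x. P (x$1, x$5)) has_derivative (\<lambda>h. Pr * h$1 + Pe * h$5)) (at u)"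
    by simp
  have "\<forall>k. ((\<lambda>x. fluxF gm P al x $ k) has_derivative
      (\<lambda>h. (flux_jacobian gm P Pr Pe al u *v h) $ k)) (at u)"
    using exhaust_2[of al] unfolding forall_5
    by (elim disjE; simp add: fluxF_def flux_jacobian_def Let_def matrix_vector_mult_def sum_5 axis_def;
        auto intro!: derivative_eq_intros E' P' ext simp: algebra_simps)
  then show "((\<lambda>x. fluxF gm P al x $ k) has_derivative
      (\<lambda>h. (flux_jacobian gm P Pr Pe al u *v h) $ k)) (at u)" for k
    by blast
qed

definition primitive_matrix ::
    "real^2^2 \<Rightarrow> real \<Rightarrow> real \<Rightarrow> real \<Rightarrow> 2 \<Rightarrow> real^5 \<Rightarrow> real^5^5" where
  "primitive_matrix gi p Pr Pe al u = (let r = u$1; va = vel u $ al; d = axis al 1 :: real^2 in vector [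
     vector [va, r * d$1, r * d$2, 0, 0],
     vector [gi$1$al * Pr / r, va, 0, 0, gi$1$al * Pe / r],
     vector [gi$2$al * Pr / r, 0, va, 0, gi$2$al * Pe / r],
     vector [0, 0, 0, va, 0],
     vector [0, p * d$1 / r, p * d$2 / r, 0, va]])"

lemma consQ_jacobian_mult_primitive_matrix:
  assumes sym: "transpose gm = gm" and inv: "gm ** matrix_inv gm = mat 1" and r: "u$1 \<noteq> 0"
  shows "consQ_jacobian gm u ** primitive_matrix (matrix_inv gm) (P (u$1, u$5)) Pr Pe al u
    = flux_jacobian gm P Pr Pe al u"
proof -
  have "(lowered_vel gm u v* matrix_inv gm) $ al = vel u $ al"
    unfolding lowered_vel_def vector_matrix_mult_right_inverse_sym[OF sym inv] ..
  then have raise: "lowered_vel gm u $ 1 * matrix_inv gm $ 1 $ al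
      + lowered_vel gm u $ 2 * matrix_inv gm $ 2 $ al = vel u $ al"
    by (simp add: vector_matrix_mult_def sum_2)
  show ?thesis
    unfolding vec_eq_iff forall_5
    using r
    by (simp add: consQ_jacobian_def flux_jacobian_def primitive_matrix_def Let_def
        matrix_matrix_mult_def sum_5 field_simps)
      (simp add: raise flip: distrib_left)
qed

(* Not via det_lowerdiagonal: the numeral 5 is the least element of the type 5. *)
lemma det_consQ_jacobian: "det (consQ_jacobian gm u) = sqrt (det gm) ^ 5 * (u$1) ^ 4"
  unfolding det_5 by (simp add: consQ_jacobian_def Let_def power_def)

lemma charpoly_primitive_matrix:
  fixes gi :: "real^2^2" and u :: "real^5" and w :: "real^2" and x :: real
  assumes r: "u$1 \<noteq> 0"
  defines "y \<equiv> x - vel u \<bullet> w" and "a \<equiv> gi *v w"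
  shows "det (mat x - (w$1 *\<^sub>R primitive_matrix gi p Pr Pe 1 u
      + w$2 *\<^sub>R primitive_matrix gi p Pr Pe 2 u))
    = y^3 * (y^2 - (w \<bullet> a) * (Pr + p * Pe / (u$1)^2))"
proof -
  let ?r = "u$1"
  have "mat x - (w$1 *\<^sub>R primitive_matrix gi p Pr Pe 1 u
      + w$2 *\<^sub>R primitive_matrix gi p Pr Pe 2 u)
    = vector [
       vector [y, - ?r * w$1, - ?r * w$2, 0, 0],
       vector [- a$1 * Pr / ?r, y, 0, 0, - a$1 * Pe / ?r],
       vector [- a$2 * Pr / ?r, 0, y, 0, - a$2 * Pe / ?r],
       vector [0, 0, 0, y, 0],
       vector [0, - p * w$1 / ?r, - p * w$2 / ?r, 0, y]]"
    unfolding vec_eq_iff forall_5 using r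
    by (simp add: primitive_matrix_def Let_def axis_def mat_def y_def a_def inner_vec_def
        matrix_vector_mult_def sum_2 field_simps)
  also have "det \<dots> = y^3 * (y^2 - (w \<bullet> a) * (Pr + p * Pe / ?r^2))"
    unfolding det_5 using r
    by (simp add: inner_vec_def sum_2 field_simps power2_eq_square power3_eq_cube)
  finally show ?thesis .
qed

lemma matrix_inv_jacobian_consQ_mult_jacobian_fluxF:
  assumes sym: "transpose gm = gm" and g: "det gm > 0" and r: "u$1 \<noteq> 0"
    and P: "(P has_derivative (\<lambda>h. Pr * fst h + Pe * snd h)) (at (u$1, u$5))"
  shows "matrix_inv (jacobian (consQ gm) (at u)) ** jacobian (fluxF gm P al) (at u)
    = primitive_matrix (matrix_inv gm) (P (u$1, u$5)) Pr Pe al u"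
proof -
  have "gm ** matrix_inv gm = mat 1"
    using g by (simp add: matrix_inv_mult_self(1) invertible_det_nz)
  then have factor: "flux_jacobian gm P Pr Pe al u
      = consQ_jacobian gm u ** primitive_matrix (matrix_inv gm) (P (u$1, u$5)) Pr Pe al u"
    using consQ_jacobian_mult_primitive_matrix[OF sym _ r] by simp
  have "invertible (consQ_jacobian gm u)"
    using g r by (simp add: invertible_det_nz det_consQ_jacobian)
  then show ?thesis
    unfolding jacobian_at_eqI[OF has_derivative_consQ[OF sym]]
      jacobian_at_eqI[OF has_derivative_fluxF[OF sym P]] factor
    by (rule matrix_inv_mult_cancel_left)
qed

lemma eigenvalues_are_primitive_matrix:
  assumes r: "u$1 \<noteq> 0" and w: "w \<bullet> (gi *v w) = 1" and c: "c^2 = Pr + p * Pe / (u$1)^2"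
  shows "eigenvalues_are
    (w$1 *\<^sub>R primitive_matrix gi p Pr Pe 1 u + w$2 *\<^sub>R primitive_matrix gi p Pr Pe 2 u)
    [vel u \<bullet> w, vel u \<bullet> w, vel u \<bullet> w, vel u \<bullet> w + c, vel u \<bullet> w - c]"
  unfolding eigenvalues_are_def charpoly_primitive_matrix[OF r] w c[symmetric]
  by (simp add: power2_eq_square power3_eq_cube algebra_simps)

theorem mainTheorem4:
  fixes gm :: "real^2^2" and P :: "real \<times> real \<Rightarrow> real"
    and Pr Pe \<rho> e V3 :: real and v :: "real^2"
  assumes sym: "transpose gm = gm"
    and posdef: "\<forall>x::real^2. x \<noteq> 0 \<longrightarrow> x \<bullet> (gm *v x) > 0"
    and rho_pos: "\<rho> > 0"
    and P_deriv: "(P has_derivative (\<lambda>h. Pr * fst h + Pe * snd h)) (at (\<rho>, e))"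
    and sound: "P (\<rho>, e) * Pe + \<rho>^2 * Pr > 0"
  defines "c \<equiv> sqrt (P (\<rho>, e) * Pe + \<rho>^2 * Pr) / \<rho>"
  shows "let U = (vector [\<rho>, v$1, v$2, V3, e] :: real^5);
             gi = matrix_inv gm;
             A0 = jacobian (consQ gm) (at U);
             A1 = jacobian (fluxF gm P 1) (at U);
             A2 = jacobian (fluxF gm P 2) (at U);
             B1 = matrix_inv A0 ** A1;
             B2 = matrix_inv A0 ** A2
         in (\<forall>w::real^2. w \<bullet> (gi *v w) = 1 \<longrightarrow>
               eigenvalues_are ((w$1) *\<^sub>R B1 + (w$2) *\<^sub>R B2)
                 [v \<bullet> w, v \<bullet> w, v \<bullet> w, v \<bullet> w + c, v \<bullet> w - c])
            \<and> nonstrictly_hyperbolic gi B1 B2"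
proof -
  define U where "U = (vector [\<rho>, v$1, v$2, V3, e] :: real^5)"
  have U: "U$1 = \<rho>" "U$5 = e" "vel U = v"
    by (simp_all add: U_def vel_def vec_eq_iff forall_2)
  have "c^2 = Pr + P (\<rho>, e) * Pe / \<rho>^2"
    using sound rho_pos unfolding c_def by (simp add: power_divide field_simps)
  then have eigenvalues: "\<forall>w. w \<bullet> (matrix_inv gm *v w) = 1 \<longrightarrow>
      eigenvalues_are (w$1 *\<^sub>R primitive_matrix (matrix_inv gm) (P (\<rho>, e)) Pr Pe 1 U
        + w$2 *\<^sub>R primitive_matrix (matrix_inv gm) (P (\<rho>, e)) Pr Pe 2 U)
        [v \<bullet> w, v \<bullet> w, v \<bullet> w, v \<bullet> w + c, v \<bullet> w - c]"
    using eigenvalues_are_primitive_matrix[of U] rho_pos U by auto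
  have "matrix_inv (jacobian (consQ gm) (at U)) ** jacobian (fluxF gm P al) (at U)
      = primitive_matrix (matrix_inv gm) (P (\<rho>, e)) Pr Pe al U" for al
    using matrix_inv_jacobian_consQ_mult_jacobian_fluxF[OF sym det_pos_if_pos_definite_2[OF sym posdef]]
      rho_pos P_deriv U
    by simp
  then show ?thesis
    unfolding Let_def U_def[symmetric] nonstrictly_hyperbolic_def
    using eigenvalues by fastforce
qed

end
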